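(* Let $(\Theta,\mathbf{Q},\leq)$ be a $\Theta$-projective system of size $t$ in an artin triangulated $R$-category $\mathcal{T}$, with triangles $K(i)\to Q(i)\xrightarrow{\beta_i}\Theta(i)\to K(i)[1]$. Then: (a) for each $i\in[1,t]$, $\beta_i:Q(i)\to\Theta(i)$ is a $\mathcal{P}(\Theta)$-cover of $\Theta(i)$; (b) if $(\Theta,\mathbf{Q}',\leq)$ is another $\Theta$-projective system of size $t$ in $\mathcal{T}$ with maps $\beta'_i:Q'(i)\to\Theta(i)$, then for each $i$ there is an isomorphism $\rho_i:Q(i)\to Q'(i)$ with $\beta'_i\rho_i=\beta_i$.
   Context: Artin triangulated $R$-category: triangulated, $R$ commutative artinian, Hom-sets finitely generated $R$-modules, $R$-bilinear composition, $R$-linear shift, Krull–Schmidt. $\mathfrak{F}(\mathcal{X})$: objects $M$ admitting distinguished triangles $M_{k-1}\to M_k\to X_k\to M_{k-1}[1]$ ($k=0,\dots,n$), $M_{-1}=0=X_0$, $M_n=M$, $X_k\in\mathcal{X}$ for $k\ge1$. A $\Theta$-projective system of size $t$: $\le$ a linear order on $[1,t]$; $\Theta(i)$ non-zero with $\mathrm{Hom}(\Theta(j),\Theta(i))=0$ for $j>i$; $Q(i)$ indecomposable with $Q=\bigoplus Q(i)$ satisfying $\mathrm{Hom}(Q,\Theta(j)[\pm1])=0$ for all $j$; for each $i$ a distinguished triangle $K(i)\to Q(i)\xrightarrow{\beta_i}\Theta(i)\to K(i)[1]$ with $K(i)\in\mathfrak{F}(\{\Theta(j):j>i\})$, $\mathrm{Hom}(K(i)[1],\Theta(i))=0$.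 $\mathcal{P}(\Theta)=\{X:\mathrm{Hom}(X,L[1])=0\ \forall L\in\mathfrak{F}(\Theta)\}$. A $\mathcal{P}(\Theta)$-cover of $C$ is a morphism $f:X\to C$ with $X\in\mathcal{P}(\Theta)$ such that every morphism $X'\to C$ with $X'\in\mathcal{P}(\Theta)$ factors through $f$, and $f$ is right minimal (any $g:X\to X$ with $fg=f$ is an isomorphism). *)

theory Defs
  imports Main
begin

text \<open>Objects are the elements of type 'o, morphisms are elements of type 'm
  (typed by the hom-sets), 'r is the commutative ground ring R.
  tri is the class of distinguished triangles (X,Y,Z,u,v,w) with
  u : X -> Y, v : Y -> Z, w : Z -> X[1].\<close>

record ('o, 'm, 'r) tricat =
  hom  :: "'o \<Rightarrow> 'o \<Rightarrow> 'm set"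
  comp :: "'m \<Rightarrow> 'm \<Rightarrow> 'm"       (* comp g f = g o f *)
  idm  :: "'o \<Rightarrow> 'm"
  add  :: "'m \<Rightarrow> 'm \<Rightarrow> 'm"
  zer  :: "'o \<Rightarrow> 'o \<Rightarrow> 'm"
  neg  :: "'m \<Rightarrow> 'm"
  smul :: "'r \<Rightarrow> 'm \<Rightarrow> 'm"
  shO  :: "'o \<Rightarrow> 'o"
  shM  :: "'m \<Rightarrow> 'm"
  tri  :: "('o \<times> 'o \<times> 'o \<times> 'm \<times> 'm \<times> 'm) set"

definition is_category :: "('o,'m,'r) tricat \<Rightarrow> bool" where
  "is_category C \<longleftrightarrow>
     (\<forall>X Y Z f g. f \<in> hom C X Y \<longrightarrow> g \<in> hom C Y Z \<longrightarrow> comp C g f \<in> hom C X Z) \<and>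
     (\<forall>X. idm C X \<in> hom C X X) \<and>
     (\<forall>X Y f. f \<in> hom C X Y \<longrightarrow> comp C f (idm C X) = f \<and> comp C (idm C Y) f = f) \<and>
     (\<forall>W X Y Z f g h. f \<in> hom C W X \<longrightarrow> g \<in> hom C X Y \<longrightarrow> h \<in> hom C Y Z \<longrightarrow>
        comp C h (comp C g f) = comp C (comp C h g) f)"

definition is_iso :: "('o,'m,'r) tricat \<Rightarrow> 'o \<Rightarrow> 'o \<Rightarrow> 'm \<Rightarrow> bool" where
  "is_iso C X Y f \<longleftrightarrow> f \<in> hom C X Y \<and>
     (\<exists>g \<in> hom C Y X. comp C g f = idm C X \<and> comp C f g = idm C Y)"

definition iso_obj :: "('o,'m,'r) tricat \<Rightarrow> 'o \<Rightarrow> 'o \<Rightarrow> bool" where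
  "iso_obj C X Y \<longleftrightarrow> (\<exists>f. is_iso C X Y f)"

definition is_R_linear :: "('o,'m,'r::comm_ring_1) tricat \<Rightarrow> bool" where
  "is_R_linear C \<longleftrightarrow>
     (\<forall>X Y. zer C X Y \<in> hom C X Y) \<and>
     (\<forall>X Y f g. f \<in> hom C X Y \<longrightarrow> g \<in> hom C X Y \<longrightarrow> add C f g \<in> hom C X Y) \<and>
     (\<forall>X Y f. f \<in> hom C X Y \<longrightarrow> neg C f \<in> hom C X Y) \<and>
     (\<forall>X Y f r. f \<in> hom C X Y \<longrightarrow> smul C r f \<in> hom C X Y) \<and>
     (\<forall>X Y f g h. f \<in> hom C X Y \<longrightarrow> g \<in> hom C X Y \<longrightarrow> h \<in> hom C X Y \<longrightarrow>
        add C (add C f g) h = add C f (add C g h)) \<and>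
     (\<forall>X Y f g. f \<in> hom C X Y \<longrightarrow> g \<in> hom C X Y \<longrightarrow> add C f g = add C g f) \<and>
     (\<forall>X Y f. f \<in> hom C X Y \<longrightarrow> add C (zer C X Y) f = f) \<and>
     (\<forall>X Y f. f \<in> hom C X Y \<longrightarrow> add C f (neg C f) = zer C X Y) \<and>
     (\<forall>X Y f r s. f \<in> hom C X Y \<longrightarrow> smul C (r + s) f = add C (smul C r f) (smul C s f)) \<and>
     (\<forall>X Y f g r. f \<in> hom C X Y \<longrightarrow> g \<in> hom C X Y \<longrightarrow>
        smul C r (add C f g) = add C (smul C r f) (smul C r g)) \<and>
     (\<forall>X Y f r s. f \<in> hom C X Y \<longrightarrow> smul C (r * s) f = smul C r (smul C s f)) \<and>
     (\<forall>X Y f. f \<in> hom C X Y \<longrightarrow> smul C 1 f = f) \<and>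
     (\<forall>X Y Z f f' g. f \<in> hom C X Y \<longrightarrow> f' \<in> hom C X Y \<longrightarrow> g \<in> hom C Y Z \<longrightarrow>
        comp C g (add C f f') = add C (comp C g f) (comp C g f')) \<and>
     (\<forall>X Y Z f g g'. f \<in> hom C X Y \<longrightarrow> g \<in> hom C Y Z \<longrightarrow> g' \<in> hom C Y Z \<longrightarrow>
        comp C (add C g g') f = add C (comp C g f) (comp C g' f)) \<and>
     (\<forall>X Y Z f g r. f \<in> hom C X Y \<longrightarrow> g \<in> hom C Y Z \<longrightarrow>
        comp C (smul C r g) f = smul C r (comp C g f) \<and>
        comp C g (smul C r f) = smul C r (comp C g f))"

inductive_set lin_span :: "('o,'m,'r) tricat \<Rightarrow> 'o \<Rightarrow> 'o \<Rightarrow> 'm set \<Rightarrow> 'm set"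
  for C X Y S where
  span_zero: "zer C X Y \<in> lin_span C X Y S"
| span_gen: "s \<in> S \<Longrightarrow> s \<in> lin_span C X Y S"
| span_add: "f \<in> lin_span C X Y S \<Longrightarrow> g \<in> lin_span C X Y S \<Longrightarrow> add C f g \<in> lin_span C X Y S"
| span_smul: "f \<in> lin_span C X Y S \<Longrightarrow> smul C r f \<in> lin_span C X Y S"

definition hom_fin_gen :: "('o,'m,'r) tricat \<Rightarrow> bool" where
  "hom_fin_gen C \<longleftrightarrow> (\<forall>X Y. \<exists>S. finite S \<and> S \<subseteq> hom C X Y \<and> hom C X Y \<subseteq> lin_span C X Y S)"

definition is_ideal_r :: "'r::comm_ring_1 set \<Rightarrow> bool" where
  "is_ideal_r I \<longleftrightarrow> 0 \<in> I \<and> (\<forall>a\<in>I. \<forall>b\<in>I. a + b \<in> I) \<and> (\<forall>a\<in>I. \<forall>r. r * a \<in> I)"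

definition artinian_ring :: "'r::comm_ring_1 itself \<Rightarrow> bool" where
  "artinian_ring _ \<longleftrightarrow> (\<forall>Is :: nat \<Rightarrow> 'r set.
     (\<forall>n. is_ideal_r (Is n)) \<and> (\<forall>n. Is (Suc n) \<subseteq> Is n) \<longrightarrow> (\<exists>N. \<forall>n\<ge>N. Is n = Is N))"

definition hom_zero :: "('o,'m,'r) tricat \<Rightarrow> 'o \<Rightarrow> 'o \<Rightarrow> bool" where
  "hom_zero C X Y \<longleftrightarrow> hom C X Y = {zer C X Y}"

definition is_zero_obj :: "('o,'m,'r) tricat \<Rightarrow> 'o \<Rightarrow> bool" where
  "is_zero_obj C Z \<longleftrightarrow> (\<forall>Y. hom_zero C Z Y \<and> hom_zero C Y Z)"

fun msum :: "('o,'m,'r) tricat \<Rightarrow> 'o \<Rightarrow> 'o \<Rightarrow> 'm list \<Rightarrow> 'm" where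
  "msum C X Y [] = zer C X Y"
| "msum C X Y (f # fs) = add C f (msum C X Y fs)"

definition is_biprod :: "('o,'m,'r) tricat \<Rightarrow> nat \<Rightarrow> (nat \<Rightarrow> 'o) \<Rightarrow> 'o \<Rightarrow>
    (nat \<Rightarrow> 'm) \<Rightarrow> (nat \<Rightarrow> 'm) \<Rightarrow> bool" where
  "is_biprod C n Xs M \<iota> \<pi> \<longleftrightarrow>
     (\<forall>k<n. \<iota> k \<in> hom C (Xs k) M \<and> \<pi> k \<in> hom C M (Xs k)) \<and>
     (\<forall>k<n. \<forall>l<n. comp C (\<pi> k) (\<iota> l) = (if k = l then idm C (Xs k) else zer C (Xs l) (Xs k))) \<and>
     msum C M M (map (\<lambda>k. comp C (\<iota> k) (\<pi> k)) [0..<n]) = idm C M"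

definition is_additive :: "('o,'m,'r) tricat \<Rightarrow> bool" where
  "is_additive C \<longleftrightarrow> (\<exists>Z. is_zero_obj C Z) \<and>
     (\<forall>A B. \<exists>M \<iota> \<pi>. is_biprod C 2 (\<lambda>k. if k = 0 then A else B) M \<iota> \<pi>)"

definition local_end :: "('o,'m,'r) tricat \<Rightarrow> 'o \<Rightarrow> bool" where
  "local_end C X \<longleftrightarrow> \<not> is_zero_obj C X \<and>
     (\<forall>f \<in> hom C X X. \<forall>g \<in> hom C X X. \<not> is_iso C X X f \<longrightarrow> \<not> is_iso C X X g \<longrightarrow>
        \<not> is_iso C X X (add C f g))"

definition krull_schmidt :: "('o,'m,'r) tricat \<Rightarrow> bool" where
  "krull_schmidt C \<longleftrightarrow> (\<forall>M. \<exists>n Xs \<iota> \<pi>. is_biprod C n Xs M \<iota> \<pi> \<and> (\<forall>k<n. local_end C (Xs k)))"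

definition indecomposable :: "('o,'m,'r) tricat \<Rightarrow> 'o \<Rightarrow> bool" where
  "indecomposable C X \<longleftrightarrow> \<not> is_zero_obj C X \<and>
     (\<forall>A B \<iota> \<pi>. is_biprod C 2 (\<lambda>k. if k = 0 then A else B) X \<iota> \<pi> \<longrightarrow>
        is_zero_obj C A \<or> is_zero_obj C B)"

definition is_shift :: "('o,'m,'r) tricat \<Rightarrow> bool" where
  "is_shift C \<longleftrightarrow>
     (\<forall>X Y f. f \<in> hom C X Y \<longrightarrow> shM C f \<in> hom C (shO C X) (shO C Y)) \<and>
     (\<forall>X Y Z f g. f \<in> hom C X Y \<longrightarrow> g \<in> hom C Y Z \<longrightarrow>
        shM C (comp C g f) = comp C (shM C g) (shM C f)) \<and>
     (\<forall>X. shM C (idm C X) = idm C (shO C X)) \<and>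
     (\<forall>X Y f g. f \<in> hom C X Y \<longrightarrow> g \<in> hom C X Y \<longrightarrow> shM C (add C f g) = add C (shM C f) (shM C g)) \<and>
     (\<forall>X Y f r. f \<in> hom C X Y \<longrightarrow> shM C (smul C r f) = smul C r (shM C f)) \<and>
     (\<forall>X Y. bij_betw (shM C) (hom C X Y) (hom C (shO C X) (shO C Y))) \<and>
     (\<forall>Y. \<exists>X. iso_obj C (shO C X) Y)"

definition is_triangulated :: "('o,'m,'r) tricat \<Rightarrow> bool" where
  "is_triangulated C \<longleftrightarrow>
     (\<forall>X Y Z u v w. (X,Y,Z,u,v,w) \<in> tri C \<longrightarrow>
        u \<in> hom C X Y \<and> v \<in> hom C Y Z \<and> w \<in> hom C Z (shO C X)) \<and>
     \<comment> \<open>TR1: closure under isomorphism of triangles\<close>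
     (\<forall>X Y Z u v w X' Y' Z' u' v' w' a b c. (X,Y,Z,u,v,w) \<in> tri C \<longrightarrow>
        u' \<in> hom C X' Y' \<longrightarrow> v' \<in> hom C Y' Z' \<longrightarrow> w' \<in> hom C Z' (shO C X') \<longrightarrow>
        is_iso C X X' a \<longrightarrow> is_iso C Y Y' b \<longrightarrow> is_iso C Z Z' c \<longrightarrow>
        comp C u' a = comp C b u \<longrightarrow> comp C v' b = comp C c v \<longrightarrow>
        comp C w' c = comp C (shM C a) w \<longrightarrow> (X',Y',Z',u',v',w') \<in> tri C) \<and>
     \<comment> \<open>TR1: X -> X -> 0 -> X[1]\<close>
     (\<forall>X Z. is_zero_obj C Z \<longrightarrow> (X,X,Z,idm C X, zer C X Z, zer C Z (shO C X)) \<in> tri C) \<and>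
     \<comment> \<open>TR1: every morphism embeds in a triangle\<close>
     (\<forall>X Y u. u \<in> hom C X Y \<longrightarrow> (\<exists>Z v w. (X,Y,Z,u,v,w) \<in> tri C)) \<and>
     \<comment> \<open>TR2: rotation\<close>
     (\<forall>X Y Z u v w. u \<in> hom C X Y \<longrightarrow> v \<in> hom C Y Z \<longrightarrow> w \<in> hom C Z (shO C X) \<longrightarrow>
        ((X,Y,Z,u,v,w) \<in> tri C \<longleftrightarrow> (Y,Z,shO C X,v,w,neg C (shM C u)) \<in> tri C)) \<and>
     \<comment> \<open>TR3: morphisms of triangles\<close>
     (\<forall>X Y Z u v w X' Y' Z' u' v' w' a b. (X,Y,Z,u,v,w) \<in> tri C \<longrightarrow>
        (X',Y',Z',u',v',w') \<in> tri C \<longrightarrow> a \<in> hom C X X' \<longrightarrow> b \<in> hom C Y Y' \<longrightarrow>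
        comp C u' a = comp C b u \<longrightarrow>
        (\<exists>c \<in> hom C Z Z'. comp C c v = comp C v' b \<and> comp C w' c = comp C (shM C a) w)) \<and>
     \<comment> \<open>TR4: octahedral axiom\<close>
     (\<forall>X Y Z f g Q1 p1 d1 Q2 p2 d2 Q3 p3 d3. f \<in> hom C X Y \<longrightarrow> g \<in> hom C Y Z \<longrightarrow>
        (X,Y,Q1,f,p1,d1) \<in> tri C \<longrightarrow> (X,Z,Q2,comp C g f,p2,d2) \<in> tri C \<longrightarrow>
        (Y,Z,Q3,g,p3,d3) \<in> tri C \<longrightarrow>
        (\<exists>a \<in> hom C Q1 Q2. \<exists>b \<in> hom C Q2 Q3.
           (Q1,Q2,Q3,a,b,comp C (shM C p1) d3) \<in> tri C \<and>
           comp C a p1 = comp C p2 g \<and> comp C d2 a = d1 \<and>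
           p3 = comp C b p2 \<and> comp C d3 b = comp C (shM C f) d2))"

definition artin_triangulated_category :: "('o,'m,'r::comm_ring_1) tricat \<Rightarrow> bool" where
  "artin_triangulated_category C \<longleftrightarrow>
     artinian_ring TYPE('r) \<and> is_category C \<and> is_R_linear C \<and> is_additive C \<and>
     hom_fin_gen C \<and> is_shift C \<and> is_triangulated C \<and> krull_schmidt C"

text \<open>M \<in> F(\<X>): Ms k plays the role of M_{k-1} (k = 0..n+1) and Xs k of X_k.\<close>

definition filt :: "('o,'m,'r) tricat \<Rightarrow> 'o set \<Rightarrow> 'o set" where
  "filt C \<X> = {M. \<exists>n Ms Xs. is_zero_obj C (Ms 0) \<and> is_zero_obj C (Xs 0) \<and> Ms (Suc n) = M \<and>
      (\<forall>k\<le>n. \<exists>u v w. (Ms k, Ms (Suc k), Xs k, u, v, w) \<in> tri C) \<and>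
      (\<forall>k\<in>{1..n}. Xs k \<in> \<X>)}"

definition P_class :: "('o,'m,'r) tricat \<Rightarrow> nat \<Rightarrow> (nat \<Rightarrow> 'o) \<Rightarrow> 'o set" where
  "P_class C t \<Theta> = {X. \<forall>L \<in> filt C (\<Theta> ` {1..t}). hom_zero C X (shO C L)}"

definition is_cover :: "('o,'m,'r) tricat \<Rightarrow> 'o set \<Rightarrow> 'o \<Rightarrow> 'o \<Rightarrow> 'm \<Rightarrow> bool" where
  "is_cover C \<P> X Y f \<longleftrightarrow> X \<in> \<P> \<and> f \<in> hom C X Y \<and>
     (\<forall>X' \<in> \<P>. \<forall>g \<in> hom C X' Y. \<exists>h \<in> hom C X' X. comp C f h = g) \<and>
     (\<forall>g \<in> hom C X X. comp C f g = f \<longrightarrow> is_iso C X X g)"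

definition proj_system :: "('o,'m,'r) tricat \<Rightarrow> nat \<Rightarrow> (nat \<Rightarrow> 'o) \<Rightarrow> (nat \<Rightarrow> 'o) \<Rightarrow>
    (nat \<times> nat) set \<Rightarrow> (nat \<Rightarrow> 'm) \<Rightarrow> bool" where
  "proj_system C t \<Theta> Q le \<beta> \<longleftrightarrow>
     linear_order_on {1..t} le \<and>
     (\<forall>i\<in>{1..t}. \<not> is_zero_obj C (\<Theta> i)) \<and>
     (\<forall>i\<in>{1..t}. \<forall>j\<in>{1..t}. (i,j) \<in> le \<and> i \<noteq> j \<longrightarrow> hom_zero C (\<Theta> j) (\<Theta> i)) \<and>
     (\<forall>i\<in>{1..t}. indecomposable C (Q i)) \<and>
     (\<exists>QQ \<iota> \<pi>. is_biprod C t (\<lambda>k. Q (Suc k)) QQ \<iota> \<pi> \<and>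
        (\<forall>j\<in>{1..t}. hom_zero C QQ (shO C (\<Theta> j)) \<and>
           (\<forall>Y. iso_obj C (shO C Y) (\<Theta> j) \<longrightarrow> hom_zero C QQ Y))) \<and>
     (\<forall>i\<in>{1..t}. \<exists>K a c. (K, Q i, \<Theta> i, a, \<beta> i, c) \<in> tri C \<and>
        K \<in> filt C (\<Theta> ` {j\<in>{1..t}. (i,j) \<in> le \<and> j \<noteq> i}) \<and>
        hom_zero C (shO C K) (\<Theta> i))"

end

theory Submission
  imports Defs
begin

text \<open>Let \<open>\<P> = \<P>(\<Theta>)\<close>. The summand \<open>Q(i)\<close> of \<open>Q\<close> lies in \<open>\<P>\<close>, because \<open>Hom(Q(i), -[1])\<close>
  vanishes on every \<open>\<Theta>(j)\<close> and the class of \<open>L\<close> with \<open>Hom(Q(i), L[1]) = 0\<close> is closed under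
  extensions. For \<open>X \<in> \<P>\<close>, applying \<open>Hom(X, -)\<close> to \<open>K(i) \<rightarrow> Q(i) \<rightarrow> \<Theta>(i) \<rightarrow> K(i)[1]\<close> shows
  that every map \<open>X \<rightarrow> \<Theta>(i)\<close> lifts along \<open>\<beta>\<^sub>i\<close>, since \<open>K(i) \<in> \<F>(\<Theta>)\<close>. The map \<open>\<beta>\<^sub>i\<close> is
  nonzero because \<open>\<Theta>(i) \<noteq> 0\<close> and \<open>Hom(K(i)[1], \<Theta>(i)) = 0\<close>, and \<open>Q(i)\<close>, being indecomposable
  in a Krull--Schmidt category, has a local endomorphism ring; so \<open>\<beta>\<^sub>i\<close> is right minimal, and
  (a) holds. Part (b) is the uniqueness of covers up to isomorphism.\<close>

locale category =
  fixes C :: "('o,'m,'r::comm_ring_1) tricat"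
  assumes category: "is_category C"
begin

lemma comp_hom [intro]: "f \<in> hom C X Y \<Longrightarrow> g \<in> hom C Y Z \<Longrightarrow> comp C g f \<in> hom C X Z"
  using category unfolding is_category_def by simp

lemma idm_hom [simp, intro]: "idm C X \<in> hom C X X"
  using category unfolding is_category_def by simp

lemma comp_idm_right [simp]: "f \<in> hom C X Y \<Longrightarrow> comp C f (idm C X) = f"
  using category unfolding is_category_def by simp

lemma comp_idm_left [simp]: "f \<in> hom C X Y \<Longrightarrow> comp C (idm C Y) f = f"
  using category unfolding is_category_def by simp

lemma comp_assoc:
  "f \<in> hom C W X \<Longrightarrow> g \<in> hom C X Y \<Longrightarrow> h \<in> hom C Y Z \<Longrightarrow>
   comp C h (comp C g f) = comp C (comp C h g) f"
  using category unfolding is_category_def by simp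

lemma is_isoI:
  "f \<in> hom C X Y \<Longrightarrow> g \<in> hom C Y X \<Longrightarrow> comp C g f = idm C X \<Longrightarrow> comp C f g = idm C Y \<Longrightarrow>
   is_iso C X Y f"
  unfolding is_iso_def by blast

lemma is_iso_comp:
  assumes "is_iso C X Y a" and "is_iso C Y Z b" shows "is_iso C X Z (comp C b a)"
proof -
  obtain a' where a: "a \<in> hom C X Y" "a' \<in> hom C Y X" "comp C a' a = idm C X" "comp C a a' = idm C Y"
    using assms(1) unfolding is_iso_def by blast
  obtain b' where b: "b \<in> hom C Y Z" "b' \<in> hom C Z Y" "comp C b' b = idm C Y" "comp C b b' = idm C Z"
    using assms(2) unfolding is_iso_def by blast
  have ba: "comp C b a \<in> hom C X Z" and ab: "comp C a' b' \<in> hom C Z X" using a b by auto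
  have "comp C (comp C a' b') (comp C b a) = comp C a' (comp C (comp C b' b) a)"
    using comp_assoc[OF ba b(2) a(2)] comp_assoc[OF a(1) b(1) b(2)] by simp
  also have "\<dots> = idm C X" using a b by simp
  finally have left: "comp C (comp C a' b') (comp C b a) = idm C X" .
  have "comp C (comp C b a) (comp C a' b') = comp C b (comp C (comp C a a') b')"
    using comp_assoc[OF ab a(1) b(1)] comp_assoc[OF b(2) a(2) a(1)] by simp
  also have "\<dots> = idm C Z" using a b by simp
  finally have right: "comp C (comp C b a) (comp C a' b') = idm C Z" .
  show ?thesis using a b left right by (intro is_isoI) auto
qed

lemma is_iso_idm: "is_iso C X X (idm C X)"
  using is_isoI[OF idm_hom idm_hom] comp_idm_left[OF idm_hom] by simp

lemma is_iso_conj_iff: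
  assumes \<phi>: "\<phi> \<in> hom C M X" and \<psi>: "\<psi> \<in> hom C X M"
    and "comp C \<psi> \<phi> = idm C M" and "comp C \<phi> \<psi> = idm C X"
    and x: "x \<in> hom C M M"
  shows "is_iso C X X (comp C \<phi> (comp C x \<psi>)) \<longleftrightarrow> is_iso C M M x"
proof
  have \<phi>_iso: "is_iso C M X \<phi>" and \<psi>_iso: "is_iso C X M \<psi>"
    using assms by (auto intro: is_isoI)
  have x\<psi>: "comp C x \<psi> \<in> hom C X M" using x \<psi> by blast
  have "comp C \<psi> (comp C (comp C \<phi> (comp C x \<psi>)) \<phi>) = comp C \<psi> (comp C \<phi> (comp C (comp C x \<psi>) \<phi>))"
    using comp_assoc[OF \<phi> x\<psi> \<phi>] by simp
  also have "comp C (comp C x \<psi>) \<phi> = x"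
    using comp_assoc[OF \<phi> \<psi> x] assms x by simp
  also have "comp C \<psi> (comp C \<phi> x) = x"
    using comp_assoc[OF x \<phi> \<psi>] assms x by simp
  finally have x_eq: "x = comp C \<psi> (comp C (comp C \<phi> (comp C x \<psi>)) \<phi>)" ..
  show "is_iso C M M x" if "is_iso C X X (comp C \<phi> (comp C x \<psi>))"
    using x_eq is_iso_comp[OF is_iso_comp[OF \<phi>_iso that] \<psi>_iso] by simp
  show "is_iso C X X (comp C \<phi> (comp C x \<psi>))" if "is_iso C M M x"
    using is_iso_comp[OF is_iso_comp[OF \<psi>_iso that] \<phi>_iso] comp_assoc[OF \<psi> x \<phi>] by simp
qed

text \<open>Two covers of the same object factor through each other, and right minimality makes
  both composites isomorphisms; a one-sided inverse on each side then forces the factorization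
  itself to be invertible.\<close>

lemma covers_iso:
  assumes cov: "is_cover C \<P> X Y f" and cov': "is_cover C \<P> X' Y f'"
  shows "\<exists>\<rho>. is_iso C X X' \<rho> \<and> comp C f' \<rho> = f"
proof -
  have X: "X \<in> \<P>" "f \<in> hom C X Y" and X': "X' \<in> \<P>" "f' \<in> hom C X' Y"
    using cov cov' unfolding is_cover_def by auto
  obtain h where h: "h \<in> hom C X X'" "comp C f' h = f"
    using cov' X unfolding is_cover_def by blast
  obtain h' where h': "h' \<in> hom C X' X" "comp C f h' = f'"
    using cov X' unfolding is_cover_def by blast
  have "comp C f (comp C h' h) = f" using comp_assoc[OF h(1) h'(1) X(2)] h h' by simp
  then obtain a where a: "a \<in> hom C X X" "comp C a (comp C h' h) = idm C X"
    using cov h h' unfolding is_cover_def is_iso_def by blast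
  have "comp C f' (comp C h h') = f'" using comp_assoc[OF h'(1) h(1) X'(2)] h h' by simp
  then obtain b where b: "b \<in> hom C X' X'" "comp C (comp C h h') b = idm C X'"
    using cov' h h' unfolding is_cover_def is_iso_def by blast
  define l where "l = comp C a h'"
  define r where "r = comp C h' b"
  have l: "l \<in> hom C X' X" "comp C l h = idm C X"
    unfolding l_def using a h h' by (auto simp: comp_assoc)
  have r: "r \<in> hom C X' X" "comp C h r = idm C X'"
    unfolding r_def using b h h' by (auto simp: comp_assoc)
  have "l = comp C (comp C l h) r" using l r comp_assoc[OF r(1) h(1) l(1)] by simp
  hence "l = r" using l r by simp
  hence "is_iso C X X' h" using is_isoI[OF h(1) l(1) l(2)] r by simp
  thus ?thesis using h by blast
qed

end

locale preadditive_category = category +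
  assumes R_linear: "is_R_linear C"
begin

lemma zer_hom [simp, intro]: "zer C X Y \<in> hom C X Y"
  using R_linear unfolding is_R_linear_def by simp

lemma add_hom [intro]: "f \<in> hom C X Y \<Longrightarrow> g \<in> hom C X Y \<Longrightarrow> add C f g \<in> hom C X Y"
  using R_linear unfolding is_R_linear_def by simp

lemma neg_hom [intro]: "f \<in> hom C X Y \<Longrightarrow> neg C f \<in> hom C X Y"
  using R_linear unfolding is_R_linear_def by simp

lemma add_assoc:
  "f \<in> hom C X Y \<Longrightarrow> g \<in> hom C X Y \<Longrightarrow> h \<in> hom C X Y \<Longrightarrow>
   add C (add C f g) h = add C f (add C g h)"
  using R_linear unfolding is_R_linear_def by simp

lemma add_commute: "f \<in> hom C X Y \<Longrightarrow> g \<in> hom C X Y \<Longrightarrow> add C f g = add C g f"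
  using R_linear unfolding is_R_linear_def by simp

lemma add_zer_left [simp]: "f \<in> hom C X Y \<Longrightarrow> add C (zer C X Y) f = f"
  using R_linear unfolding is_R_linear_def by simp

lemma add_neg_right [simp]: "f \<in> hom C X Y \<Longrightarrow> add C f (neg C f) = zer C X Y"
  using R_linear unfolding is_R_linear_def by simp

lemma comp_distrib_left:
  "f \<in> hom C X Y \<Longrightarrow> f' \<in> hom C X Y \<Longrightarrow> g \<in> hom C Y Z \<Longrightarrow>
   comp C g (add C f f') = add C (comp C g f) (comp C g f')"
  using R_linear unfolding is_R_linear_def by simp

lemma comp_distrib_right:
  "f \<in> hom C X Y \<Longrightarrow> g \<in> hom C Y Z \<Longrightarrow> g' \<in> hom C Y Z \<Longrightarrow>
   comp C (add C g g') f = add C (comp C g f) (comp C g' f)"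
  using R_linear unfolding is_R_linear_def by simp

lemma add_zer_right [simp]: "f \<in> hom C X Y \<Longrightarrow> add C f (zer C X Y) = f"
  using add_commute[OF zer_hom, of f X Y] by simp

lemma add_neg_left [simp]: "f \<in> hom C X Y \<Longrightarrow> add C (neg C f) f = zer C X Y"
  using add_commute[OF neg_hom, of f X Y f] by simp

lemma neg_unique:
  assumes f: "f \<in> hom C X Y" and g: "g \<in> hom C X Y" and "add C f g = zer C X Y"
  shows "g = neg C f"
proof -
  have "neg C f = add C (neg C f) (add C f g)" using assms by (simp add: neg_hom)
  also have "\<dots> = add C (add C (neg C f) f) g" using add_assoc[OF neg_hom[OF f] f g] by simp
  finally show ?thesis using f g by simp
qed

lemma neg_neg [simp]: "f \<in> hom C X Y \<Longrightarrow> neg C (neg C f) = f"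
  using neg_unique[of "neg C f" X Y f] by (simp add: neg_hom)

lemma neg_zer [simp]: "neg C (zer C X Y) = zer C X Y"
  using neg_unique[of "zer C X Y" X Y "zer C X Y"] by simp

lemma add_left_cancel:
  assumes f: "f \<in> hom C X Y" and g: "g \<in> hom C X Y" and h: "h \<in> hom C X Y"
    and "add C f g = add C f h"
  shows "g = h"
proof -
  have "g = add C (neg C f) (add C f g)" using add_assoc[OF neg_hom[OF f] f g] f g by simp
  also have "\<dots> = add C (neg C f) (add C f h)" using assms(4) by simp
  also have "\<dots> = h" using add_assoc[OF neg_hom[OF f] f h] f h by simp
  finally show ?thesis .
qed

lemma eq_if_add_neg_eq_zer:
  assumes f: "f \<in> hom C X Y" and g: "g \<in> hom C X Y" and "add C f (neg C g) = zer C X Y"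
  shows "f = g"
  using neg_unique[OF f neg_hom[OF g] assms(3)] f g by (metis neg_neg)

lemma comp_zer_left [simp]:
  assumes f: "f \<in> hom C X Y" shows "comp C (zer C Y Z) f = zer C X Z"
proof -
  let ?x = "comp C (zer C Y Z) f"
  have x: "?x \<in> hom C X Z" using f by blast
  have "add C ?x ?x = add C ?x (zer C X Z)"
    using comp_distrib_right[OF f zer_hom zer_hom, of Z] x by simp
  thus ?thesis using add_left_cancel[OF x x zer_hom] by simp
qed

lemma comp_zer_right [simp]:
  assumes g: "g \<in> hom C Y Z" shows "comp C g (zer C X Y) = zer C X Z"
proof -
  let ?x = "comp C g (zer C X Y)"
  have x: "?x \<in> hom C X Z" using g by blast
  have "add C ?x ?x = add C ?x (zer C X Z)"
    using comp_distrib_left[OF zer_hom zer_hom g, of X] x by simp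
  thus ?thesis using add_left_cancel[OF x x zer_hom] by simp
qed

lemma comp_neg_left:
  assumes f: "f \<in> hom C X Y" and g: "g \<in> hom C Y Z"
  shows "comp C (neg C g) f = neg C (comp C g f)"
proof -
  have "add C (comp C g f) (comp C (neg C g) f) = zer C X Z"
    using comp_distrib_right[OF f g neg_hom[OF g]] f g by simp
  thus ?thesis using neg_unique f g by blast
qed

lemma comp_neg_right:
  assumes f: "f \<in> hom C X Y" and g: "g \<in> hom C Y Z"
  shows "comp C g (neg C f) = neg C (comp C g f)"
proof -
  have "add C (comp C g f) (comp C g (neg C f)) = zer C X Z"
    using comp_distrib_left[OF f neg_hom[OF f] g] f g by simp
  thus ?thesis using neg_unique f g by blast
qed

lemma comp_diff_left:
  assumes f: "f \<in> hom C X Y" and e: "e \<in> hom C Y Y"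
  shows "comp C (add C (idm C Y) (neg C e)) f = add C f (neg C (comp C e f))"
  using comp_distrib_right[OF f idm_hom neg_hom[OF e]] comp_neg_left[OF f e] f by simp

lemma comp_diff_right:
  assumes e: "e \<in> hom C X X" and g: "g \<in> hom C X Z"
  shows "comp C g (add C (idm C X) (neg C e)) = add C g (neg C (comp C g e))"
  using comp_distrib_left[OF idm_hom neg_hom[OF e] g] comp_neg_right[OF e g] g by simp

lemma add_diff_cancel:
  assumes "e \<in> hom C X Y" "f \<in> hom C X Y"
  shows "add C e (add C f (neg C e)) = f"
  using assms add_assoc[of e X Y "neg C e" f] add_commute[of f X Y "neg C e"] by (simp add: neg_hom)

lemma zero_objI: assumes "idm C X = zer C X X" shows "is_zero_obj C X"
  unfolding is_zero_obj_def hom_zero_def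
proof (intro allI conjI equalityI subsetI)
  fix Y f assume f: "f \<in> hom C X Y"
  have "f = comp C f (idm C X)" using f by simp
  thus "f \<in> {zer C X Y}" using assms f by simp
next
  fix Y f assume f: "f \<in> hom C Y X"
  have "f = comp C (idm C X) f" using f by simp
  thus "f \<in> {zer C Y X}" using assms f by simp
qed auto

lemma zero_obj_hom_eq_zer:
  "is_zero_obj C Z \<Longrightarrow> f \<in> hom C Z Y \<Longrightarrow> f = zer C Z Y"
  "is_zero_obj C Z \<Longrightarrow> g \<in> hom C Y Z \<Longrightarrow> g = zer C Y Z"
  unfolding is_zero_obj_def hom_zero_def by blast+

lemma hom_zeroD: "hom_zero C X Y \<Longrightarrow> f \<in> hom C X Y \<Longrightarrow> f = zer C X Y"
  unfolding hom_zero_def by blast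

lemma hom_zeroI: "(\<And>f. f \<in> hom C X Y \<Longrightarrow> f = zer C X Y) \<Longrightarrow> hom_zero C X Y"
  unfolding hom_zero_def by blast

text \<open>Conjugation by an isomorphism is additive and detects isomorphisms, so it carries
  the defining property of a local endomorphism ring across.\<close>

lemma local_end_iso:
  assumes loc: "local_end C X" and iso: "is_iso C M X \<phi>"
  shows "local_end C M"
proof -
  obtain \<psi> where \<phi>: "\<phi> \<in> hom C M X" and \<psi>: "\<psi> \<in> hom C X M"
    and \<psi>\<phi>: "comp C \<psi> \<phi> = idm C M" and \<phi>\<psi>: "comp C \<phi> \<psi> = idm C X"
    using iso unfolding is_iso_def by blast
  define conj where "conj x = comp C \<phi> (comp C x \<psi>)" for x
  have conj_iso_iff: "is_iso C X X (conj x) \<longleftrightarrow> is_iso C M M x" if "x \<in> hom C M M" for x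
    unfolding conj_def using is_iso_conj_iff[OF \<phi> \<psi> \<psi>\<phi> \<phi>\<psi> that] .
  have conj_hom: "conj x \<in> hom C X X" if "x \<in> hom C M M" for x
    unfolding conj_def using that \<phi> \<psi> by blast
  have conj_add: "conj (add C f g) = add C (conj f) (conj g)"
    if "f \<in> hom C M M" "g \<in> hom C M M" for f g
    unfolding conj_def using that \<phi> \<psi>
    by (simp add: comp_distrib_right comp_distrib_left[of _ X M _ \<phi> X] comp_hom)
  have "\<not> is_zero_obj C M"
  proof
    assume "is_zero_obj C M"
    hence "idm C M = zer C M M" using zero_obj_hom_eq_zer(1) by blast
    hence "comp C \<phi> (comp C (idm C M) \<psi>) = zer C X X" using \<phi> \<psi> by simp
    hence "idm C X = zer C X X" using \<phi>\<psi> \<psi> by simp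
    thus False using loc zero_objI unfolding local_end_def by blast
  qed
  moreover have "\<not> is_iso C M M (add C f g)"
    if "f \<in> hom C M M" "g \<in> hom C M M" "\<not> is_iso C M M f" "\<not> is_iso C M M g" for f g
    using loc that conj_hom conj_add conj_iso_iff add_hom unfolding local_end_def by metis
  ultimately show ?thesis unfolding local_end_def by blast
qed

lemma local_end_one_minus_iso:
  assumes "local_end C M" and g: "g \<in> hom C M M" and "\<not> is_iso C M M g"
  shows "is_iso C M M (add C (idm C M) (neg C g))"
proof (rule ccontr)
  assume "\<not> ?thesis"
  hence "\<not> is_iso C M M (add C g (add C (idm C M) (neg C g)))"
    using assms g unfolding local_end_def by blast
  thus False using add_diff_cancel[OF g idm_hom] is_iso_idm by simp
qed

text \<open>If \<open>\<beta> g = \<beta>\<close> with \<open>g\<close> not invertible, then \<open>1 - g\<close> is invertible and \<open>\<beta> (1 - g) = 0\<close>.\<close>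

lemma local_end_right_minimal:
  assumes loc: "local_end C M" and \<beta>: "\<beta> \<in> hom C M Y" and nz: "\<beta> \<noteq> zer C M Y"
    and g: "g \<in> hom C M M" and \<beta>g: "comp C \<beta> g = \<beta>"
  shows "is_iso C M M g"
proof (rule ccontr)
  assume "\<not> is_iso C M M g"
  then obtain k where k: "k \<in> hom C M M" "comp C (add C (idm C M) (neg C g)) k = idm C M"
    using local_end_one_minus_iso[OF loc g] unfolding is_iso_def by blast
  have e: "add C (idm C M) (neg C g) \<in> hom C M M" using g by blast
  have "comp C \<beta> (add C (idm C M) (neg C g)) = zer C M Y"
    using comp_diff_right[OF g \<beta>] \<beta>g \<beta> by simp
  hence "\<beta> = zer C M Y" using comp_assoc[OF k(1) e \<beta>] k \<beta> by simp
  with nz show False ..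
qed

lemma hom_zero_biprod_summand:
  assumes bp: "is_biprod C n Xs M \<iota> \<pi>" and k: "k < n" and hz: "hom_zero C M Y"
  shows "hom_zero C (Xs k) Y"
proof (rule hom_zeroI)
  fix f assume f: "f \<in> hom C (Xs k) Y"
  have \<iota>: "\<iota> k \<in> hom C (Xs k) M" and \<pi>: "\<pi> k \<in> hom C M (Xs k)"
    and \<pi>\<iota>: "comp C (\<pi> k) (\<iota> k) = idm C (Xs k)"
    using bp k unfolding is_biprod_def by auto
  have "f = comp C (comp C f (\<pi> k)) (\<iota> k)" using comp_assoc[OF \<iota> \<pi> f] \<pi>\<iota> f by simp
  also have "comp C f (\<pi> k) = zer C M Y" using hom_zeroD[OF hz] \<pi> f by blast
  finally show "f = zer C (Xs k) Y" using \<iota> by simp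
qed

lemma is_biprod_2I:
  assumes i1: "i1 \<in> hom C A M" and p1: "p1 \<in> hom C M A"
    and i2: "i2 \<in> hom C B M" and p2: "p2 \<in> hom C M B"
    and "comp C p1 i1 = idm C A" "comp C p2 i2 = idm C B"
    and "comp C p1 i2 = zer C B A" "comp C p2 i1 = zer C A B"
    and "add C (comp C i1 p1) (comp C i2 p2) = idm C M"
  shows "is_biprod C 2 (\<lambda>k. if k = 0 then A else B) M
           (\<lambda>k. if k = 0 then i1 else i2) (\<lambda>k. if k = 0 then p1 else p2)"
proof -
  have two: "k < 2 \<longleftrightarrow> k = 0 \<or> k = 1" for k :: nat by auto
  have "[0..<2] = [0::nat, 1]" by (simp add: numeral_2_eq_2)
  thus ?thesis
    unfolding is_biprod_def two using assms i2 p2 by (auto simp: comp_hom)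
qed

end

locale triangulated_category = preadditive_category +
  assumes additive: "is_additive C" and shift: "is_shift C" and triangulated: "is_triangulated C"
begin

lemma zero_obj_ex: "\<exists>Z. is_zero_obj C Z"
  using additive unfolding is_additive_def by simp

lemma shM_hom [intro]: "f \<in> hom C X Y \<Longrightarrow> shM C f \<in> hom C (shO C X) (shO C Y)"
  using shift unfolding is_shift_def by simp

lemma shM_comp:
  "f \<in> hom C X Y \<Longrightarrow> g \<in> hom C Y Z \<Longrightarrow> shM C (comp C g f) = comp C (shM C g) (shM C f)"
  using shift unfolding is_shift_def by simp

lemma shM_idm [simp]: "shM C (idm C X) = idm C (shO C X)"
  using shift unfolding is_shift_def by simp

lemma shM_add:
  "f \<in> hom C X Y \<Longrightarrow> g \<in> hom C X Y \<Longrightarrow> shM C (add C f g) = add C (shM C f) (shM C g)"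
  using shift unfolding is_shift_def by simp

lemma shM_bij: "bij_betw (shM C) (hom C X Y) (hom C (shO C X) (shO C Y))"
  using shift unfolding is_shift_def by simp

lemma shM_zer [simp]: "shM C (zer C X Y) = zer C (shO C X) (shO C Y)"
proof -
  let ?z = "shM C (zer C X Y)"
  have z: "?z \<in> hom C (shO C X) (shO C Y)" by blast
  have "add C ?z ?z = add C ?z (zer C (shO C X) (shO C Y))"
    using shM_add[OF zer_hom zer_hom, of X Y] z by simp
  thus ?thesis using add_left_cancel[OF z z zer_hom] by simp
qed

lemma zero_obj_shift: assumes "is_zero_obj C Z" shows "is_zero_obj C (shO C Z)"
proof -
  obtain f where f: "f \<in> hom C Z Z" "idm C (shO C Z) = shM C f"
    using shM_bij[of Z Z] idm_hom unfolding bij_betw_def by (metis imageE)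
  have "f = zer C Z Z" using zero_obj_hom_eq_zer(1)[OF assms f(1)] .
  hence "idm C (shO C Z) = zer C (shO C Z) (shO C Z)" using f(2) by simp
  thus ?thesis by (rule zero_objI)
qed

lemma tri_homs:
  "(X,Y,Z,u,v,w) \<in> tri C \<Longrightarrow> u \<in> hom C X Y \<and> v \<in> hom C Y Z \<and> w \<in> hom C Z (shO C X)"
  using triangulated unfolding is_triangulated_def by (elim conjE) blast

lemma tri_trivial: "is_zero_obj C Z \<Longrightarrow> (X, X, Z, idm C X, zer C X Z, zer C Z (shO C X)) \<in> tri C"
  using triangulated[unfolded is_triangulated_def,
      THEN conjunct2, THEN conjunct2, THEN conjunct1]
  by blast

lemma tri_exists: "u \<in> hom C X Y \<Longrightarrow> \<exists>Z v w. (X,Y,Z,u,v,w) \<in> tri C"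
  using triangulated[unfolded is_triangulated_def,
      THEN conjunct2, THEN conjunct2, THEN conjunct2, THEN conjunct1]
  by blast

lemma tri_rotate_iff:
  "u \<in> hom C X Y \<Longrightarrow> v \<in> hom C Y Z \<Longrightarrow> w \<in> hom C Z (shO C X) \<Longrightarrow>
   (X,Y,Z,u,v,w) \<in> tri C \<longleftrightarrow> (Y, Z, shO C X, v, w, neg C (shM C u)) \<in> tri C"
  using triangulated[unfolded is_triangulated_def,
      THEN conjunct2, THEN conjunct2, THEN conjunct2, THEN conjunct2, THEN conjunct1]
  by blast

lemma tri_rotate: "(X,Y,Z,u,v,w) \<in> tri C \<Longrightarrow> (Y, Z, shO C X, v, w, neg C (shM C u)) \<in> tri C"
  using tri_rotate_iff[of u X Y v Z w] tri_homs[of X Y Z u v w] by blast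

lemma tri_morphism:
  "(X,Y,Z,u,v,w) \<in> tri C \<Longrightarrow> (X',Y',Z',u',v',w') \<in> tri C \<Longrightarrow>
   a \<in> hom C X X' \<Longrightarrow> b \<in> hom C Y Y' \<Longrightarrow> comp C u' a = comp C b u \<Longrightarrow>
   \<exists>c \<in> hom C Z Z'. comp C c v = comp C v' b \<and> comp C w' c = comp C (shM C a) w"
  using triangulated[unfolded is_triangulated_def,
      THEN conjunct2, THEN conjunct2, THEN conjunct2, THEN conjunct2, THEN conjunct2, THEN conjunct1]
  by blast

lemma tri_comp_zero: assumes T: "(A,B,D,u,v,w) \<in> tri C" shows "comp C v u = zer C A D"
proof -
  obtain Z where Z: "is_zero_obj C Z" using zero_obj_ex by blast
  have u: "u \<in> hom C A B" and v: "v \<in> hom C B D" using tri_homs[OF T] by auto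
  obtain c where "c \<in> hom C Z D" "comp C c (zer C A Z) = comp C v u"
    using tri_morphism[OF tri_trivial[OF Z, of A] T idm_hom u] u by auto
  thus ?thesis using comp_zer_right by metis
qed

text \<open>Exactness of \<open>Hom(W, -)\<close>: compare the rotated triangles of \<open>W \<rightarrow> W \<rightarrow> 0\<close> and of \<open>u\<close>,
  and undo the shift, which is bijective on hom-sets.\<close>

lemma tri_lift:
  assumes T: "(A,B,D,u,v,w) \<in> tri C" and g: "g \<in> hom C W B" and vg: "comp C v g = zer C W D"
  shows "\<exists>h \<in> hom C W A. comp C u h = g"
proof -
  obtain Z where Z: "is_zero_obj C Z" using zero_obj_ex by blast
  have u: "u \<in> hom C A B" using tri_homs[OF T] by auto
  have "comp C v g = comp C (zer C Z D) (zer C W Z)" using vg comp_zer_left[OF zer_hom] by metis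
  then obtain c where c: "c \<in> hom C (shO C W) (shO C A)"
    "comp C (neg C (shM C u)) c = comp C (shM C g) (neg C (shM C (idm C W)))"
    using tri_morphism[OF tri_rotate[OF tri_trivial[OF Z, of W]] tri_rotate[OF T] g zer_hom] by blast
  have su: "shM C u \<in> hom C (shO C A) (shO C B)" and sg: "shM C g \<in> hom C (shO C W) (shO C B)"
    using u g by auto
  have "neg C (comp C (shM C u) c) = neg C (shM C g)"
    using c comp_neg_left[OF c(1) su] comp_neg_right[OF idm_hom sg] sg by simp
  hence u_c: "comp C (shM C u) c = shM C g"
    using neg_neg[OF sg] neg_neg[OF comp_hom[OF c(1) su]] by metis
  obtain k where k: "k \<in> hom C W A" "c = shM C k"
    using c(1) shM_bij[of W A] unfolding bij_betw_def by auto
  have "shM C (comp C u k) = shM C g" using u_c k shM_comp[OF k(1) u] by simp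
  hence "comp C u k = g"
    using shM_bij[of W B] g comp_hom[OF k(1) u] unfolding bij_betw_def inj_on_def by blast
  thus ?thesis using k by blast
qed

text \<open>Exactness of \<open>Hom(-, W)\<close>: compare the triangle of \<open>u\<close> with \<open>0 \<rightarrow> W \<rightarrow> W \<rightarrow> 0[1]\<close>.\<close>

lemma tri_extend:
  assumes T: "(A,B,D,u,v,w) \<in> tri C" and f: "f \<in> hom C B W" and fu: "comp C f u = zer C A W"
  shows "\<exists>h \<in> hom C D W. comp C h v = f"
proof -
  obtain Z where Z: "is_zero_obj C Z" using zero_obj_ex by blast
  have "(W, W, shO C Z, idm C W, zer C W (shO C Z), neg C (shM C (zer C Z W))) \<in> tri C"
    using tri_trivial[OF zero_obj_shift[OF Z], of W] by simp
  hence T0: "(Z, W, W, zer C Z W, idm C W, zer C W (shO C Z)) \<in> tri C"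
    using tri_rotate_iff[OF zer_hom idm_hom zer_hom] by blast
  have "comp C (zer C Z W) (zer C A Z) = comp C f u" using fu comp_zer_left[OF zer_hom] by metis
  then obtain c where "c \<in> hom C D W" "comp C c v = comp C (idm C W) f"
    using tri_morphism[OF T T0 zer_hom f] by blast
  thus ?thesis using f by auto
qed

lemma hom_zero_tri_middle:
  assumes T: "(A,B,D,u,v,w) \<in> tri C" and "hom_zero C W A" and "hom_zero C W D"
  shows "hom_zero C W B"
proof (rule hom_zeroI)
  fix g assume g: "g \<in> hom C W B"
  have u: "u \<in> hom C A B" and v: "v \<in> hom C B D" using tri_homs[OF T] by auto
  have "comp C v g = zer C W D" using hom_zeroD[OF assms(3)] g v by blast
  then obtain k where "k \<in> hom C W A" "comp C u k = g" using tri_lift[OF T g] by blast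
  thus "g = zer C W B" using hom_zeroD[OF assms(2)] comp_zer_right[OF u] by metis
qed

lemma filt_mono: "\<X> \<subseteq> \<Y> \<Longrightarrow> filt C \<X> \<subseteq> filt C \<Y>"
  unfolding filt_def by blast

text \<open>Induction along the filtration: rotating a step \<open>M \<rightarrow> M' \<rightarrow> X \<rightarrow> M[1]\<close> three times
  gives \<open>M[1] \<rightarrow> M'[1] \<rightarrow> X[1] \<rightarrow> M[2]\<close>, with \<open>M'[1]\<close> in the middle.\<close>

lemma hom_zero_shift_filt:
  assumes \<X>: "\<forall>X \<in> \<X>. hom_zero C W (shO C X)" and L: "L \<in> filt C \<X>"
  shows "hom_zero C W (shO C L)"
proof -
  obtain n Ms Xs where Ms0: "is_zero_obj C (Ms 0)" and Xs0: "is_zero_obj C (Xs 0)"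
      and L_eq: "Ms (Suc n) = L"
      and steps: "\<forall>k\<le>n. \<exists>u v w. (Ms k, Ms (Suc k), Xs k, u, v, w) \<in> tri C"
      and Xs: "\<forall>k\<in>{1..n}. Xs k \<in> \<X>"
    using L unfolding filt_def by blast
  have zero_hom_zero: "hom_zero C W Z" if "is_zero_obj C Z" for Z
    using that unfolding is_zero_obj_def by blast
  have "hom_zero C W (shO C (Ms k))" if "k \<le> Suc n" for k
    using that
  proof (induction k)
    case 0
    show ?case using zero_hom_zero[OF zero_obj_shift[OF Ms0]] .
  next
    case (Suc k)
    then obtain u v w where T: "(Ms k, Ms (Suc k), Xs k, u, v, w) \<in> tri C" using steps by auto
    have "hom_zero C W (shO C (Xs k))"
      using zero_hom_zero[OF zero_obj_shift[OF Xs0]] \<X> Xs Suc.prems by (cases "k = 0") auto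
    thus ?case
      using hom_zero_tri_middle[OF tri_rotate[OF tri_rotate[OF tri_rotate[OF T]]]] Suc by simp
  qed
  thus ?thesis using L_eq by blast
qed

lemma tri_connecting_zero_if_split_mono:
  assumes T: "(X,M,B,i,v,w) \<in> tri C" and p: "p \<in> hom C M X" and pi: "comp C p i = idm C X"
  shows "w = zer C B (shO C X)"
proof -
  have i: "i \<in> hom C X M" and w: "w \<in> hom C B (shO C X)" using tri_homs[OF T] by auto
  have si: "shM C i \<in> hom C (shO C X) (shO C M)" and sp: "shM C p \<in> hom C (shO C M) (shO C X)"
    using i p by auto
  have "neg C (comp C (shM C i) w) = zer C B (shO C M)"
    using tri_comp_zero[OF tri_rotate[OF tri_rotate[OF T]]] comp_neg_left[OF w si] by simp
  hence iw: "comp C (shM C i) w = zer C B (shO C M)"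
    using neg_neg[OF comp_hom[OF w si]] by (metis neg_zer)
  have "w = comp C (shM C (comp C p i)) w" using pi w by simp
  also have "\<dots> = comp C (shM C p) (comp C (shM C i) w)"
    using shM_comp[OF i p] comp_assoc[OF w si sp] by simp
  finally show ?thesis using iw comp_zer_right[OF sp] by simp
qed

lemma tri_epi_if_connecting_zero:
  assumes T: "(X,M,B,i,v,w) \<in> tri C" and w: "w = zer C B (shO C X)"
    and x: "x \<in> hom C B W" and xv: "comp C x v = zer C M W"
  shows "x = zer C B W"
proof -
  obtain h where "h \<in> hom C (shO C X) W" "comp C h w = x"
    using tri_extend[OF tri_rotate[OF T] x xv] by blast
  thus ?thesis using w comp_zer_right by metis
qed

text \<open>A split monomorphism \<open>i\<close> splits off a direct summand: in its triangle the connecting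
  morphism vanishes, so the cone \<open>v\<close> is an epimorphism, and \<open>1 - i p\<close>, which kills \<open>i\<close>,
  factors through \<open>v\<close>.\<close>

lemma split_mono_complement:
  assumes i: "i \<in> hom C X M" and p: "p \<in> hom C M X" and pi: "comp C p i = idm C X"
  obtains B s v where "s \<in> hom C B M" "v \<in> hom C M B"
    "comp C v i = zer C X B" "comp C p s = zer C B X" "comp C v s = idm C B"
    "add C (comp C i p) (comp C s v) = idm C M"
proof -
  obtain B v w where T: "(X,M,B,i,v,w) \<in> tri C" using tri_exists[OF i] by blast
  have v: "v \<in> hom C M B" using tri_homs[OF T] by auto
  have vi: "comp C v i = zer C X B" using tri_comp_zero[OF T] .
  have epi: "x = zer C B W" if "x \<in> hom C B W" "comp C x v = zer C M W" for x W
    using tri_epi_if_connecting_zero[OF T tri_connecting_zero_if_split_mono[OF T p pi] that] .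
  define e where "e = comp C i p"
  have e: "e \<in> hom C M M" unfolding e_def using i p by blast
  have ei: "comp C e i = i" unfolding e_def using comp_assoc[OF i p i] pi i by simp
  have pe: "comp C p e = p" unfolding e_def using comp_assoc[OF p i p] pi p by simp
  have ve: "comp C v e = zer C M B" unfolding e_def using comp_assoc[OF p i v] vi p by simp
  define f where "f = add C (idm C M) (neg C e)"
  have f: "f \<in> hom C M M" unfolding f_def using e by blast
  have "comp C f i = zer C X M" unfolding f_def using comp_diff_left[OF i e] ei i by simp
  then obtain s where s: "s \<in> hom C B M" "comp C s v = f" using tri_extend[OF T f] by blast
  have "comp C (comp C p s) v = comp C p f" using comp_assoc[OF v s(1) p] s by simp
  also have "\<dots> = zer C M X" unfolding f_def using comp_diff_right[OF e p] pe p by simp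
  finally have ps: "comp C p s = zer C B X" using epi[OF comp_hom[OF s(1) p]] by simp
  have vs: "comp C v s \<in> hom C B B" using s(1) v by blast
  have vf: "comp C v f = v" unfolding f_def using comp_diff_right[OF e v] ve v by simp
  have "comp C (add C (comp C v s) (neg C (idm C B))) v
      = add C (comp C (comp C v s) v) (neg C (comp C (idm C B) v))"
    using comp_distrib_right[OF v vs neg_hom[OF idm_hom]] comp_neg_left[OF v idm_hom] by simp
  also have "\<dots> = zer C M B" using comp_assoc[OF v s(1) v] s(2) vf v by simp
  finally have "add C (comp C v s) (neg C (idm C B)) = zer C B B"
    using epi[OF add_hom[OF vs neg_hom[OF idm_hom]]] by simp
  hence "comp C v s = idm C B" using eq_if_add_neg_eq_zer[OF vs idm_hom] by simp
  moreover have "add C (comp C i p) (comp C s v) = idm C M"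
    using add_diff_cancel[OF e idm_hom] s(2) unfolding e_def f_def by simp
  ultimately show ?thesis using that s v vi ps by blast
qed

text \<open>Indecomposability kills the complement \<open>B\<close> of a nonzero split summand.\<close>

lemma indecomposable_split_mono_retraction:
  assumes ind: "indecomposable C M" and nz: "\<not> is_zero_obj C X"
    and i: "i \<in> hom C X M" and p: "p \<in> hom C M X" and pi: "comp C p i = idm C X"
  shows "comp C i p = idm C M"
proof -
  obtain B s v where s: "s \<in> hom C B M" and v: "v \<in> hom C M B"
    and vi: "comp C v i = zer C X B" and ps: "comp C p s = zer C B X" and vs: "comp C v s = idm C B"
    and sum: "add C (comp C i p) (comp C s v) = idm C M"
    by (rule split_mono_complement[OF i p pi])
  have "\<forall>A B \<iota> \<pi>. is_biprod C 2 (\<lambda>k. if k = 0 then A else B) M \<iota> \<pi> \<longrightarrow>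
      is_zero_obj C A \<or> is_zero_obj C B"
    using ind unfolding indecomposable_def by blast
  from this[rule_format, OF is_biprod_2I[OF i p s v pi vs ps vi sum]]
  have "is_zero_obj C X \<or> is_zero_obj C B" by simp
  hence "is_zero_obj C B" using nz by blast
  hence "s = zer C B M" using zero_obj_hom_eq_zer(1)[OF _ s] by blast
  hence "comp C s v = zer C M M" using comp_zer_left[OF v] by simp
  thus ?thesis using sum comp_hom[OF p i] by simp
qed

lemma tri_second_nonzero:
  assumes T: "(K,Q,Y,a,\<beta>,c) \<in> tri C" and hz: "hom_zero C (shO C K) Y" and nz: "\<not> is_zero_obj C Y"
  shows "\<beta> \<noteq> zer C Q Y"
proof
  assume "\<beta> = zer C Q Y"
  hence "comp C (idm C Y) \<beta> = zer C Q Y" using tri_homs[OF T] by simp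
  then obtain h where h: "h \<in> hom C (shO C K) Y" "comp C h c = idm C Y"
    using tri_extend[OF tri_rotate[OF T] idm_hom] by blast
  have "c \<in> hom C Y (shO C K)" using tri_homs[OF T] by simp
  hence "idm C Y = zer C Y Y" using h hom_zeroD[OF hz h(1)] by simp
  with nz zero_objI show False by blast
qed

lemma tri_is_cover:
  assumes T: "(K,Q,Y,a,\<beta>,c) \<in> tri C" and Q: "Q \<in> \<P>" and loc: "local_end C Q"
    and nz: "\<not> is_zero_obj C Y" and hz: "hom_zero C (shO C K) Y"
    and \<P>: "\<forall>X \<in> \<P>. hom_zero C X (shO C K)"
  shows "is_cover C \<P> Q Y \<beta>"
proof -
  have \<beta>: "\<beta> \<in> hom C Q Y" and c: "c \<in> hom C Y (shO C K)" using tri_homs[OF T] by auto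
  have "\<exists>h \<in> hom C X Q. comp C \<beta> h = g" if X: "X \<in> \<P>" and g: "g \<in> hom C X Y" for X g
  proof -
    have "comp C c g = zer C X (shO C K)" using hom_zeroD \<P> X g c by blast
    thus ?thesis using tri_lift[OF tri_rotate[OF T] g] by blast
  qed
  moreover have "is_iso C Q Q g" if "g \<in> hom C Q Q" "comp C \<beta> g = \<beta>" for g
    using local_end_right_minimal[OF loc \<beta> tri_second_nonzero[OF T hz nz] that] .
  ultimately show ?thesis unfolding is_cover_def using Q \<beta> by blast
qed

end

locale krull_schmidt_triangulated_category = triangulated_category +
  assumes krull_schmidt: "krull_schmidt C"
begin

text \<open>The first summand \<open>X\<^sub>0\<close> of a Krull--Schmidt decomposition of \<open>M\<close> is a split summand
  with local endomorphism ring, hence all of \<open>M\<close>.\<close>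

lemma indecomposable_local_end:
  assumes ind: "indecomposable C M" shows "local_end C M"
proof -
  obtain n Xs \<iota> \<pi> where bp: "is_biprod C n Xs M \<iota> \<pi>" and loc: "\<forall>k<n. local_end C (Xs k)"
    using krull_schmidt unfolding krull_schmidt_def by blast
  have nzM: "\<not> is_zero_obj C M" using ind unfolding indecomposable_def by blast
  have "n \<noteq> 0"
  proof
    assume "n = 0"
    hence "idm C M = zer C M M" using bp unfolding is_biprod_def by simp
    with nzM zero_objI show False by blast
  qed
  hence i: "\<iota> 0 \<in> hom C (Xs 0) M" and p: "\<pi> 0 \<in> hom C M (Xs 0)"
    and pi: "comp C (\<pi> 0) (\<iota> 0) = idm C (Xs 0)" and loc0: "local_end C (Xs 0)"
    using bp loc unfolding is_biprod_def by auto
  have "\<not> is_zero_obj C (Xs 0)" using loc0 unfolding local_end_def by blast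
  hence "is_iso C M (Xs 0) (\<pi> 0)"
    using is_isoI[OF p i _ pi] indecomposable_split_mono_retraction[OF ind _ i p pi] by blast
  thus ?thesis using local_end_iso[OF loc0] by blast
qed

lemma proj_system_cover:
  assumes P: "proj_system C t \<Theta> Q le \<beta>" and i: "i \<in> {1..t}"
  shows "is_cover C (P_class C t \<Theta>) (Q i) (\<Theta> i) (\<beta> i)"
proof -
  obtain QQ \<iota> \<pi> where bp: "is_biprod C t (\<lambda>k. Q (Suc k)) QQ \<iota> \<pi>"
      and QQ: "\<forall>j\<in>{1..t}. hom_zero C QQ (shO C (\<Theta> j))"
    using P unfolding proj_system_def by blast
  obtain K a c where T: "(K, Q i, \<Theta> i, a, \<beta> i, c) \<in> tri C"
      and K: "K \<in> filt C (\<Theta> ` {j\<in>{1..t}. (i,j) \<in> le \<and> j \<noteq> i})"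
      and hz: "hom_zero C (shO C K) (\<Theta> i)"
    using P i unfolding proj_system_def by blast
  have k: "i - 1 < t" "Suc (i - 1) = i" using i by auto
  have "hom_zero C (Q i) (shO C (\<Theta> j))" if "j \<in> {1..t}" for j
    using hom_zero_biprod_summand[OF bp k(1) QQ[rule_format, OF that]] k(2) by simp
  hence "hom_zero C (Q i) (shO C L)" if "L \<in> filt C (\<Theta> ` {1..t})" for L
    using hom_zero_shift_filt[OF _ that] by blast
  hence Q: "Q i \<in> P_class C t \<Theta>" unfolding P_class_def by blast
  have "{j\<in>{1..t}. (i,j) \<in> le \<and> j \<noteq> i} \<subseteq> {1..t}" by blast
  hence "K \<in> filt C (\<Theta> ` {1..t})" using subsetD[OF filt_mono[OF image_mono] K] by blast
  hence P_class: "\<forall>X \<in> P_class C t \<Theta>. hom_zero C X (shO C K)" unfolding P_class_def by blast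
  have "indecomposable C (Q i)" and nz: "\<not> is_zero_obj C (\<Theta> i)"
    using P i unfolding proj_system_def by blast+
  thus ?thesis using tri_is_cover[OF T Q indecomposable_local_end nz hz P_class] by blast
qed

end

lemma krull_schmidt_triangulated_category_if_artin:
  "artin_triangulated_category C \<Longrightarrow> krull_schmidt_triangulated_category C"
  unfolding artin_triangulated_category_def
  by unfold_locales simp_all

theorem proposition5p6:
  fixes C :: "('o, 'm, 'r::comm_ring_1) tricat"
    and t :: nat and \<Theta> Q :: "nat \<Rightarrow> 'o" and le :: "(nat \<times> nat) set" and \<beta> :: "nat \<Rightarrow> 'm"
  assumes "artin_triangulated_category C"
    and "proj_system C t \<Theta> Q le \<beta>"
  shows "(\<forall>i\<in>{1..t}. is_cover C (P_class C t \<Theta>) (Q i) (\<Theta> i) (\<beta> i)) \<and>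
         (\<forall>Q' \<beta>'. proj_system C t \<Theta> Q' le \<beta>' \<longrightarrow>
            (\<forall>i\<in>{1..t}. \<exists>\<rho>. is_iso C (Q i) (Q' i) \<rho> \<and> comp C (\<beta>' i) \<rho> = \<beta> i))"
proof -
  interpret krull_schmidt_triangulated_category C
    using assms(1) by (rule krull_schmidt_triangulated_category_if_artin)
  show ?thesis using proj_system_cover[OF assms(2)] proj_system_cover covers_iso by blast
qed

end
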